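(* For every $t\ge 0$ and every collection $\Omega$ of functions, $$\rho_1\bigl(\mathsf{cr}^{(t)}\bigr)=\rho_1\bigl(\mathsf{GTL}_2^{(t)}(\Omega)\bigr).$$
   Context: Fix integers $n\ge 1$ and $\ell\ge 1$. A graph is a triple $G=(V_G,E_G,\mathrm{col}_G)$ with $V_G=[n]=\{1,\dots,n\}$, $E_G$ a set of unordered pairs of distinct vertices (undirected, no loops), and a vertex labelling $\mathrm{col}_G:V_G\to\mathbb R^\ell$; $N_G(v)=\{u:uv\in E_G\}$. Let $\mathcal G_1=\{(G,v):G \text{ a graph},\ v\in V_G\}$. Tensor language: let $\Omega$ be a collection of functions, each $f:\mathbb R^p\to\mathbb R$ for some $p\ge1$. Expressions are generated by $\varphi::=\mathbf 1_{x=y}\mid \mathbf 1_{x\neq y}\mid E(x,y)\mid P_s(x)\mid \varphi\cdot\varphi\mid \varphi+\varphi\mid a\cdot\varphi\mid f(\varphi_1,\dots,\varphi_p)\mid \sum_x\varphi$ ($s\in[\ell]$, $a\in\mathbb R$, $f\in\Omega$ of arity $p$), with the usual free variables ($\sum_x$ binds $x$). Semantics for a graph $G$ and valuation $\nu$ of the variables in $V_G$: $[\![E(x,y)]\!]^\nu_G=1$ if $\nu(x)\nu(y)\in E_G$ else $0$; $[\![P_s(x)]\!]^\nu_G=\mathrm{col}_G(\nu(x))_s$; $[\![\mathbf 1_{x\,\mathrm{op}\,y}]\!]^\nu_G=1$ if $\nu(x)\,\mathrm{op}\,\nu(y)$ else $0$; $\cdot,+,a\cdot,f$ act on values; $[\![\sum_x\varphi]\!]^\nu_G=\sum_{v\in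 V_G}[\![\varphi]\!]^{\nu[x\mapsto v]}_G$. Summation depth $\mathrm{sd}$: $0$ for atoms, maximum over components for $\cdot,+,f(\dots)$, unchanged by $a\cdot$, and $\mathrm{sd}(\sum_x\varphi)=\mathrm{sd}(\varphi)+1$. Guarded fragment $\mathsf{GTL}_2(\Omega)$: the smallest set of expressions, each with exactly one free variable, which is $x_1$ or $x_2$, containing $\mathbf 1_{x_i=x_i}$, $\mathbf 1_{x_i\ne x_i}$, $P_s(x_i)$ ($i\in\{1,2\}$, $s\in[\ell]$), and closed under: $\varphi\cdot\psi$, $\varphi+\psi$ when $\varphi,\psi$ have the same single free variable; $a\cdot\varphi$; $f(\varphi_1,\dots,\varphi_p)$ for $f\in\Omega$ when all $\varphi_j$ have the same single free variable; and $\sum_{x_j}\bigl(E(x_i,x_j)\cdot\varphi\bigr)$ where $\{i,j\}=\{1,2\}$ and $\varphi$ has free variable $x_j$. $\mathsf{GTL}_2^{(t)}(\Omega)$ is its subset of summation depth at most $t$. $\rho_1(\mathsf{GTL}_2^{(t)}(\Omega))$ is the set of pairs $((G,v),(H,w))\in\mathcal G_1\times\mathcal G_1$ such that $[\![\varphi]\!]^{x_1\mapsto v}_G=[\![\varphi]\!]^{x_1\mapsto w}_H$ for all $\varphi\in\mathsf{GTL}_2^{(t)}(\Omega)$ with free variable $x_1$. Color refinement: $\mathsf{cr}^{(0)}(G,v)=\mathrm{col}_G(v)$ and $\mathsf{cr}^{(t+1)}(G,v)=\bigl(\mathsf{cr}^{(t)}(G,v),\{\!\{\mathsf{cr}^{(t)}(G,u):u\in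 N_G(v)\}\!\}\bigr)$ (multiset), compared as formal objects across graphs. $\rho_1(\mathsf{cr}^{(t)})=\{((G,v),(H,w)):\mathsf{cr}^{(t)}(G,v)=\mathsf{cr}^{(t)}(H,w)\}$. *)

theory Defs
  imports Complex_Main "HOL-Library.Multiset"
begin

text \<open>A graph is a pair (E, col): E is a set of unordered pairs (two-element sets)
  of vertices, col assigns to each vertex a label in R^l, represented as a real list of
  length l (coordinate s, 1 <= s <= l, is the list entry at index s - 1).\<close>

type_synonym graph = "nat set set \<times> (nat \<Rightarrow> real list)"

definition edges :: "graph \<Rightarrow> nat set set" where "edges G = fst G"
definition col :: "graph \<Rightarrow> nat \<Rightarrow> real list" where "col G = snd G"

definition is_graph :: "nat \<Rightarrow> nat \<Rightarrow> graph \<Rightarrow> bool" where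
  "is_graph n l G \<longleftrightarrow>
     edges G \<subseteq> {{u, v} | u v. u \<in> {1..n} \<and> v \<in> {1..n} \<and> u \<noteq> v} \<and>
     (\<forall>v\<in>{1..n}. length (col G v) = l)"

definition nbrs :: "graph \<Rightarrow> nat \<Rightarrow> nat set" where
  "nbrs G v = {u. {u, v} \<in> edges G}"

definition G1 :: "nat \<Rightarrow> nat \<Rightarrow> (graph \<times> nat) set" where
  "G1 n l = {(G, v). is_graph n l G \<and> v \<in> {1..n}}"

text \<open>Variables are natural numbers (x_1 = 1, x_2 = 2). A function symbol carries the
  function f : R^p -> R itself (as a function on real lists).\<close>

datatype tl =
    EqI nat nat
  | NeqI nat nat
  | Edge nat nat
  | Lab nat nat
  | Mul tl tl
  | Add tl tl
  | Scal real tl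
  | Fn "real list \<Rightarrow> real" "tl list"
  | Sum nat tl

fun sem :: "nat \<Rightarrow> graph \<Rightarrow> (nat \<Rightarrow> nat) \<Rightarrow> tl \<Rightarrow> real" where
  "sem n G \<nu> (EqI x y) = (if \<nu> x = \<nu> y then 1 else 0)"
| "sem n G \<nu> (NeqI x y) = (if \<nu> x \<noteq> \<nu> y then 1 else 0)"
| "sem n G \<nu> (Edge x y) = (if {\<nu> x, \<nu> y} \<in> edges G then 1 else 0)"
| "sem n G \<nu> (Lab s x) = col G (\<nu> x) ! (s - 1)"
| "sem n G \<nu> (Mul a b) = sem n G \<nu> a * sem n G \<nu> b"
| "sem n G \<nu> (Add a b) = sem n G \<nu> a + sem n G \<nu> b"
| "sem n G \<nu> (Scal c a) = c * sem n G \<nu> a"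
| "sem n G \<nu> (Fn f as) = f (map (sem n G \<nu>) as)"
| "sem n G \<nu> (Sum x a) = (\<Sum>v\<in>{1..n}. sem n G (\<nu>(x := v)) a)"

fun sd :: "tl \<Rightarrow> nat" where
  "sd (EqI x y) = 0"
| "sd (NeqI x y) = 0"
| "sd (Edge x y) = 0"
| "sd (Lab s x) = 0"
| "sd (Mul a b) = max (sd a) (sd b)"
| "sd (Add a b) = max (sd a) (sd b)"
| "sd (Scal c a) = sd a"
| "sd (Fn f as) = fold max (map sd as) 0"
| "sd (Sum x a) = sd a + 1"

text \<open>Omega: a set of pairs (p, f) where f : R^p -> R (f applied to lists of length p).
  The guarded fragment GTL_2(Omega): pairs (phi, i) meaning phi is in the fragment
  with single free variable x_i.\<close>

inductive_set gtl2 :: "nat \<Rightarrow> (nat \<times> (real list \<Rightarrow> real)) set \<Rightarrow> (tl \<times> nat) set"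
  for l :: nat and \<Omega> :: "(nat \<times> (real list \<Rightarrow> real)) set" where
  eq:   "i \<in> {1, 2} \<Longrightarrow> (EqI i i, i) \<in> gtl2 l \<Omega>"
| neq:  "i \<in> {1, 2} \<Longrightarrow> (NeqI i i, i) \<in> gtl2 l \<Omega>"
| lab:  "i \<in> {1, 2} \<Longrightarrow> s \<in> {1..l} \<Longrightarrow> (Lab s i, i) \<in> gtl2 l \<Omega>"
| mul:  "(a, i) \<in> gtl2 l \<Omega> \<Longrightarrow> (b, i) \<in> gtl2 l \<Omega> \<Longrightarrow> (Mul a b, i) \<in> gtl2 l \<Omega>"
| add:  "(a, i) \<in> gtl2 l \<Omega> \<Longrightarrow> (b, i) \<in> gtl2 l \<Omega> \<Longrightarrow> (Add a b, i) \<in> gtl2 l \<Omega>"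
| scal: "(a, i) \<in> gtl2 l \<Omega> \<Longrightarrow> (Scal c a, i) \<in> gtl2 l \<Omega>"
| fn:   "(p, f) \<in> \<Omega> \<Longrightarrow> length as = p \<Longrightarrow> (\<forall>a\<in>set as. (a, i) \<in> gtl2 l \<Omega>)
         \<Longrightarrow> (Fn f as, i) \<in> gtl2 l \<Omega>"
| agg:  "{i, j} = {1, 2} \<Longrightarrow> (a, j) \<in> gtl2 l \<Omega>
         \<Longrightarrow> (Sum j (Mul (Edge i j) a), i) \<in> gtl2 l \<Omega>"

definition rho1_gtl :: "nat \<Rightarrow> nat \<Rightarrow> (nat \<times> (real list \<Rightarrow> real)) set \<Rightarrow> nat
    \<Rightarrow> ((graph \<times> nat) \<times> (graph \<times> nat)) set" where
  "rho1_gtl n l \<Omega> t =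
     {((G, v), (H, w)). (G, v) \<in> G1 n l \<and> (H, w) \<in> G1 n l \<and>
        (\<forall>\<phi>. (\<phi>, 1) \<in> gtl2 l \<Omega> \<and> sd \<phi> \<le> t \<longrightarrow>
              sem n G (\<lambda>_. v) \<phi> = sem n H (\<lambda>_. w) \<phi>)}"

datatype crcol = Base "real list" | Ref crcol "crcol multiset"

fun cr :: "nat \<Rightarrow> graph \<Rightarrow> nat \<Rightarrow> crcol" where
  "cr 0 G v = Base (col G v)"
| "cr (Suc t) G v = Ref (cr t G v) (image_mset (\<lambda>u. cr t G u) (mset_set (nbrs G v)))"

definition rho1_cr :: "nat \<Rightarrow> nat \<Rightarrow> nat \<Rightarrow> ((graph \<times> nat) \<times> (graph \<times> nat)) set" where
  "rho1_cr n l t =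
     {((G, v), (H, w)). (G, v) \<in> G1 n l \<and> (H, w) \<in> G1 n l \<and> cr t G v = cr t H w}"

end

theory Submission
  imports Defs
begin

text \<open>
  Soundness: by induction on a guarded formula of summation depth at most t, its value at v is
  determined by the colour cr t v, because the only summation allowed is over the neighbours of
  the current vertex, and its value is then a function of the multiset of neighbour colours.

  Completeness: on any finite set X of pointed graphs, the indicator of each colour class of
  cr t is expressed on X by a guarded formula of depth at most t, by induction on t. The
  indicator of a value m of an expressed function g is the Lagrange product of
  (g - b) / (m - b) over the finitely many other values b that g takes on X; conjunctions are
  products; and the number of neighbours of colour d is the guarded sum of the indicator of d.
\<close>

lemma le_fold_max: "(x::'a::linorder) \<in> set xs \<Longrightarrow> x \<le> fold max xs a"
  unfolding Max.set_eq_fold[symmetric] by (simp add: Max_ge)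

lemma count_image_mset_mset_set:
  "finite A \<Longrightarrow> count (image_mset f (mset_set A)) d = card (A \<inter> {u. f u = d})"
  by (simp add: count_image_mset' Collect_conj_eq) (simp only: eq_commute)

lemma multiset_eq_iff_on:
  "set_mset A \<union> set_mset B \<subseteq> D \<Longrightarrow> A = B \<longleftrightarrow> (\<forall>d\<in>D. count A d = count B d)"
  by (metis count_eq_zero_iff multiset_eqI subsetD UnI1 UnI2)

lemma image_mset_eq_if_determined:
  assumes "image_mset g1 A = image_mset g2 B"
    and "\<And>x y. x \<in># A \<Longrightarrow> y \<in># B \<Longrightarrow> g1 x = g2 y \<Longrightarrow> f1 x = f2 y"
  shows "image_mset f1 A = image_mset f2 B"
  using assms
proof (induction A arbitrary: B)
  case (add x A)
  have "g1 x \<in># image_mset g2 B" unfolding add.prems(1)[symmetric] by simp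
  then obtain y where "y \<in># B" and y: "g2 y = g1 x" by auto
  then obtain B' where B: "B = add_mset y B'" by (metis mset_add)
  have "image_mset g1 A = image_mset g2 B'" using add.prems(1) B y by simp
  moreover have "f1 x' = f2 y'" if "x' \<in># A" "y' \<in># B'" "g1 x' = g2 y'" for x' y'
    using add.prems(2) that B by simp
  ultimately have "image_mset f1 A = image_mset f2 B'" using add.IH by blast
  moreover have "f1 x = f2 y" using add.prems(2) B y by simp
  ultimately show ?case using B by simp
qed simp

lemma prod_of_bool:
  "finite D \<Longrightarrow> (\<Prod>d\<in>D. of_bool (P d)) = (of_bool (\<forall>d\<in>D. P d) :: 'a::comm_semiring_1)"
  by (induction D rule: finite_induct) auto

lemma nbrs_subset:
  assumes "is_graph n l G"
  shows "nbrs G v \<subseteq> {1..n}"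
proof
  fix u assume "u \<in> nbrs G v"
  then have "{u, v} \<in> edges G" by (simp add: nbrs_def)
  then obtain a b where ab: "{u, v} = {a, b}" "a \<in> {1..n}" "b \<in> {1..n}"
    using assms unfolding is_graph_def by blast
  have "u \<in> {a, b}" unfolding ab(1)[symmetric] by simp
  with ab(2,3) show "u \<in> {1..n}" by blast
qed

lemma finite_nbrs: "is_graph n l G \<Longrightarrow> finite (nbrs G v)"
  by (rule finite_subset[OF nbrs_subset]) simp_all

lemma G1_nbr: "(G, v) \<in> G1 n l \<Longrightarrow> u \<in> nbrs G v \<Longrightarrow> (G, u) \<in> G1 n l"
  using nbrs_subset unfolding G1_def by blast

lemma sem_gtl2_local: "(\<phi>, i) \<in> gtl2 l \<Omega> \<Longrightarrow> sem n G \<nu> \<phi> = sem n G (\<lambda>_. \<nu> i) \<phi>"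
proof (induction arbitrary: \<nu> rule: gtl2.induct)
  case (mul a i b)
  show ?case using mul.IH[of \<nu>] by simp
next
  case (add a i b)
  show ?case using add.IH[of \<nu>] by simp
next
  case (scal a i c)
  show ?case using scal.IH[of \<nu>] by simp
next
  case (fn p f as i)
  have "map (sem n G \<nu>) as = map (sem n G (\<lambda>_. \<nu> i)) as"
    using fn.IH by (intro map_cong) blast+
  then show ?case unfolding sem.simps by (rule arg_cong)
next
  case (agg i j a)
  have "i \<noteq> j" using agg.hyps(1) by (auto simp: doubleton_eq_iff)
  have "sem n G (\<mu>(j := u)) a = sem n G (\<lambda>_. u) a" for \<mu> u
    using agg.IH[of "\<mu>(j := u)"] by (simp only: fun_upd_same)
  then show ?case
    unfolding sem.simps by (simp only: fun_upd_same fun_upd_other[OF \<open>i \<noteq> j\<close>])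
qed simp_all

lemma sem_agg:
  assumes "{i, j} = {1, 2}" and "(a, j) \<in> gtl2 l \<Omega>" and "is_graph n l G"
  shows "sem n G (\<lambda>_. v) (Sum j (Mul (Edge i j) a)) = (\<Sum>u\<in>nbrs G v. sem n G (\<lambda>_. u) a)"
proof -
  have "i \<noteq> j" using assms(1) by (auto simp: doubleton_eq_iff)
  have "sem n G ((\<lambda>_. v)(j := u)) a = sem n G (\<lambda>_. u) a" for u
    using sem_gtl2_local[OF assms(2), of n G "(\<lambda>_. v)(j := u)"] by (simp only: fun_upd_same)
  then have "sem n G (\<lambda>_. v) (Sum j (Mul (Edge i j) a))
      = (\<Sum>u\<in>{1..n}. (if {v, u} \<in> edges G then 1 else 0) * sem n G (\<lambda>_. u) a)"
    unfolding sem.simps by (simp only: fun_upd_same fun_upd_other[OF \<open>i \<noteq> j\<close>])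
  also have "\<dots> = (\<Sum>u\<in>{1..n} \<inter> nbrs G v. sem n G (\<lambda>_. u) a)"
    by (subst sum.inter_restrict) (auto intro!: sum.cong simp: nbrs_def insert_commute)
  also have "{1..n} \<inter> nbrs G v = nbrs G v" using nbrs_subset[OF assms(3)] by blast
  finally show ?thesis .
qed

lemma cr_eq_mono: "t' \<le> t \<Longrightarrow> cr t G v = cr t H w \<Longrightarrow> cr t' G v = cr t' H w"
  by (induction t) (auto simp: le_Suc_eq)

theorem sem_eq_if_cr_eq:
  assumes "(\<phi>, i) \<in> gtl2 l \<Omega>" and "sd \<phi> \<le> t" and "(G, v) \<in> G1 n l" and "(H, w) \<in> G1 n l"
    and "cr t G v = cr t H w"
  shows "sem n G (\<lambda>_. v) \<phi> = sem n H (\<lambda>_. w) \<phi>"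
  using assms
proof (induction arbitrary: t v w rule: gtl2.induct)
  case (lab i s)
  then show ?case using cr_eq_mono[of 0 t G v H w] by simp
next
  case (fn p f as i)
  have "sd a \<le> t" if "a \<in> set as" for a
    using le_fold_max[of "sd a" "map sd as" 0] that fn.prems(1) by auto
  then have "map (sem n G (\<lambda>_. v)) as = map (sem n H (\<lambda>_. w)) as"
    using fn.IH fn.prems(2-4) by (intro map_cong) blast+
  then show ?case unfolding sem.simps by (rule arg_cong)
next
  case (agg i j a)
  obtain t' where t: "t = Suc t'" "sd a \<le> t'" using agg.prems(1) by (cases t) auto
  have graphs: "is_graph n l G" "is_graph n l H" using agg.prems by (auto simp: G1_def)
  have "image_mset (cr t' G) (mset_set (nbrs G v)) = image_mset (cr t' H) (mset_set (nbrs H w))"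
    using agg.prems(4) t(1) by simp
  then have "image_mset (\<lambda>u. sem n G (\<lambda>_. u) a) (mset_set (nbrs G v))
      = image_mset (\<lambda>u. sem n H (\<lambda>_. u) a) (mset_set (nbrs H w))"
    by (rule image_mset_eq_if_determined)
      (use agg.IH t(2) agg.prems(2,3) G1_nbr finite_nbrs[OF graphs(1)] finite_nbrs[OF graphs(2)] in auto)
  then have "(\<Sum>u\<in>nbrs G v. sem n G (\<lambda>_. u) a) = (\<Sum>u\<in>nbrs H w. sem n H (\<lambda>_. u) a)"
    by (simp only: sum_unfold_sum_mset)
  then show ?case by (simp only: sem_agg[OF agg.hyps graphs(1)] sem_agg[OF agg.hyps graphs(2)])
next
  case (mul a i b)
  then show ?case using mul.IH[of t v w] by simp
next
  case (add a i b)
  then show ?case using add.IH[of t v w] by simp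
next
  case (scal a i c)
  then show ?case using scal.IH[of t v w] by simp
qed simp_all

definition expressible :: "nat \<Rightarrow> nat \<Rightarrow> (nat \<times> (real list \<Rightarrow> real)) set \<Rightarrow> nat \<Rightarrow> nat
    \<Rightarrow> (graph \<times> nat) set \<Rightarrow> (graph \<Rightarrow> nat \<Rightarrow> real) \<Rightarrow> bool" where
  "expressible n l \<Omega> t i X g \<longleftrightarrow>
     (\<exists>\<phi>. (\<phi>, i) \<in> gtl2 l \<Omega> \<and> sd \<phi> \<le> t \<and> (\<forall>(G, v)\<in>X. sem n G (\<lambda>_. v) \<phi> = g G v))"

lemma expressibleI:
  assumes "(\<phi>, i) \<in> gtl2 l \<Omega>" and "sd \<phi> \<le> t"
    and "\<And>G v. (G, v) \<in> X \<Longrightarrow> sem n G (\<lambda>_. v) \<phi> = g G v"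
  shows "expressible n l \<Omega> t i X g"
  using assms unfolding expressible_def by blast

lemma expressibleE:
  assumes "expressible n l \<Omega> t i X g"
  obtains \<phi> where "(\<phi>, i) \<in> gtl2 l \<Omega>" and "sd \<phi> \<le> t"
    and "\<And>G v. (G, v) \<in> X \<Longrightarrow> sem n G (\<lambda>_. v) \<phi> = g G v"
  using assms unfolding expressible_def by blast

lemma expressible_cong:
  assumes "expressible n l \<Omega> t i X g" and "\<And>G v. (G, v) \<in> X \<Longrightarrow> g G v = g' G v"
  shows "expressible n l \<Omega> t i X g'"
  using assms(1) by (rule expressibleE) (rule expressibleI, auto simp: assms(2))

lemma expressible_mono:
  assumes "expressible n l \<Omega> t i X g" and "t \<le> t'"
  shows "expressible n l \<Omega> t' i X g"
  using assms(1) by (rule expressibleE) (rule expressibleI, use assms(2) in auto)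

lemma expressible_zero: "i \<in> {1, 2} \<Longrightarrow> expressible n l \<Omega> t i X (\<lambda>_ _. 0)"
  by (rule expressibleI[of "NeqI i i"]) (auto intro: gtl2.neq)

lemma expressible_one: "i \<in> {1, 2} \<Longrightarrow> expressible n l \<Omega> t i X (\<lambda>_ _. 1)"
  by (rule expressibleI[of "EqI i i"]) (auto intro: gtl2.eq)

lemma expressible_label:
  "i \<in> {1, 2} \<Longrightarrow> s \<in> {1..l} \<Longrightarrow> expressible n l \<Omega> t i X (\<lambda>G v. col G v ! (s - 1))"
  by (rule expressibleI[of "Lab s i"]) (auto intro: gtl2.lab)

lemma expressible_affine:
  assumes "i \<in> {1, 2}" and "expressible n l \<Omega> t i X g"
  shows "expressible n l \<Omega> t i X (\<lambda>G v. (g G v - b) / c)"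
proof -
  obtain \<phi> where \<phi>: "(\<phi>, i) \<in> gtl2 l \<Omega>" "sd \<phi> \<le> t"
    and g: "\<And>G v. (G, v) \<in> X \<Longrightarrow> sem n G (\<lambda>_. v) \<phi> = g G v"
    using assms(2) by (rule expressibleE) blast
  show ?thesis
  proof (rule expressibleI)
    show "(Scal (1 / c) (Add \<phi> (Scal (- b) (EqI i i))), i) \<in> gtl2 l \<Omega>"
      using assms(1) \<phi>(1) by (intro gtl2.intros)
  qed (simp_all add: \<phi>(2) g divide_inverse mult.commute)
qed

lemma expressible_mul:
  assumes "expressible n l \<Omega> t i X g" and "expressible n l \<Omega> t i X h"
  shows "expressible n l \<Omega> t i X (\<lambda>G v. g G v * h G v)"
proof -
  obtain \<phi> where \<phi>: "(\<phi>, i) \<in> gtl2 l \<Omega>" "sd \<phi> \<le> t"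
    and g: "\<And>G v. (G, v) \<in> X \<Longrightarrow> sem n G (\<lambda>_. v) \<phi> = g G v"
    using assms(1) by (rule expressibleE) blast
  obtain \<psi> where \<psi>: "(\<psi>, i) \<in> gtl2 l \<Omega>" "sd \<psi> \<le> t"
    and h: "\<And>G v. (G, v) \<in> X \<Longrightarrow> sem n G (\<lambda>_. v) \<psi> = h G v"
    using assms(2) by (rule expressibleE) blast
  show ?thesis
    by (rule expressibleI[of "Mul \<phi> \<psi>"]) (simp_all add: gtl2.mul \<phi> \<psi> g h)
qed

lemma expressible_prod:
  assumes "finite D" and "i \<in> {1, 2}" and "\<And>d. d \<in> D \<Longrightarrow> expressible n l \<Omega> t i X (g d)"
  shows "expressible n l \<Omega> t i X (\<lambda>G v. \<Prod>d\<in>D. g d G v)"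
  using assms(1,3)
proof (induction D rule: finite_induct)
  case empty
  show ?case using expressible_one[OF assms(2)] by simp
next
  case (insert d D)
  have "expressible n l \<Omega> t i X (\<lambda>G v. g d G v * (\<Prod>d\<in>D. g d G v))"
    using insert by (intro expressible_mul) simp_all
  then show ?case using insert.hyps by simp
qed

lemma expressible_indicator:
  assumes "finite X" and "i \<in> {1, 2}" and "expressible n l \<Omega> t i X g"
  shows "expressible n l \<Omega> t i X (\<lambda>G v. of_bool (g G v = m))"
proof -
  let ?V = "(\<lambda>(G, v). g G v) ` X - {m}"
  have "expressible n l \<Omega> t i X (\<lambda>G v. \<Prod>b\<in>?V. (g G v - b) / (m - b))"
    using assms by (intro expressible_prod expressible_affine) auto
  then show ?thesis
  proof (rule expressible_cong)
    fix G v assume "(G, v) \<in> X"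
    then show "(\<Prod>b\<in>?V. (g G v - b) / (m - b)) = of_bool (g G v = m)"
      using assms(1) by (cases "g G v = m") (auto intro!: prod.neutral simp: prod_zero_iff)
  qed
qed

lemma expressible_all:
  assumes "finite D" and "i \<in> {1, 2}"
    and "\<And>d. d \<in> D \<Longrightarrow> expressible n l \<Omega> t i X (\<lambda>G v. of_bool (P d G v))"
  shows "expressible n l \<Omega> t i X (\<lambda>G v. of_bool (\<forall>d\<in>D. P d G v))"
  using expressible_prod[OF assms] by (simp add: prod_of_bool[OF assms(1)])

lemma expressible_agg:
  assumes "{i, j} = {1, 2}" and "X \<subseteq> G1 n l"
    and "\<And>G v u. (G, v) \<in> X \<Longrightarrow> u \<in> nbrs G v \<Longrightarrow> (G, u) \<in> Y"
    and "expressible n l \<Omega> t j Y g"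
  shows "expressible n l \<Omega> (Suc t) i X (\<lambda>G v. \<Sum>u\<in>nbrs G v. g G u)"
proof -
  obtain \<phi> where \<phi>: "(\<phi>, j) \<in> gtl2 l \<Omega>" "sd \<phi> \<le> t"
    and g: "\<And>G u. (G, u) \<in> Y \<Longrightarrow> sem n G (\<lambda>_. u) \<phi> = g G u"
    using assms(4) by (rule expressibleE) blast
  show ?thesis
  proof (rule expressibleI)
    show "(Sum j (Mul (Edge i j) \<phi>), i) \<in> gtl2 l \<Omega>" using assms(1) \<phi>(1) by (rule gtl2.agg)
    show "sd (Sum j (Mul (Edge i j) \<phi>)) \<le> Suc t" using \<phi>(2) by simp
  next
    fix G v assume "(G, v) \<in> X"
    then have "is_graph n l G" using assms(2) by (auto simp: G1_def)
    then have "sem n G (\<lambda>_. v) (Sum j (Mul (Edge i j) \<phi>)) = (\<Sum>u\<in>nbrs G v. sem n G (\<lambda>_. u) \<phi>)"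
      by (rule sem_agg[OF assms(1) \<phi>(1)])
    also have "\<dots> = (\<Sum>u\<in>nbrs G v. g G u)"
      using g assms(3)[OF \<open>(G, v) \<in> X\<close>] by (intro sum.cong) auto
    finally show "sem n G (\<lambda>_. v) (Sum j (Mul (Edge i j) \<phi>)) = (\<Sum>u\<in>nbrs G v. g G u)" .
  qed
qed

theorem expressible_cr_indicator:
  assumes "i \<in> {1, 2}" and "finite X" and "X \<subseteq> G1 n l"
  shows "expressible n l \<Omega> t i X (\<lambda>G v. of_bool (cr t G v = c))"
  using assms
proof (induction t arbitrary: i X c)
  case 0
  show ?case
  proof (cases "\<exists>L. c = Base L \<and> length L = l")
    case True
    then obtain L where c: "c = Base L" "length L = l" by blast
    have "expressible n l \<Omega> 0 i X (\<lambda>G v. of_bool (\<forall>k\<in>{..<l}. col G v ! k = L ! k))"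
      using 0 expressible_label[of i "Suc k" l n \<Omega> 0 X for k]
      by (intro expressible_all expressible_indicator) auto
    then show ?thesis
    proof (rule expressible_cong)
      fix G v assume "(G, v) \<in> X"
      then have "length (col G v) = l" using "0.prems"(3) by (auto simp: G1_def is_graph_def)
      then show "of_bool (\<forall>k\<in>{..<l}. col G v ! k = L ! k) = of_bool (cr 0 G v = c)"
        using c by (auto simp: list_eq_iff_nth_eq)
    qed
  next
    case False
    have "cr 0 G v \<noteq> c" if "(G, v) \<in> X" for G v
      using False that "0.prems"(3) by (auto simp: G1_def is_graph_def)
    then show ?thesis by (intro expressible_cong[OF expressible_zero[OF "0.prems"(1)]]) auto
  qed
next
  case (Suc t)
  show ?case
  proof (cases c)
    case (Base L)
    then show ?thesis by (intro expressible_cong[OF expressible_zero[OF Suc.prems(1)]]) auto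
  next
    case (Ref c0 M)
    define j :: nat where "j = 3 - i"
    have ij: "{i, j} = {1, 2}" "j \<in> {1, 2}" using Suc.prems(1) by (auto simp: j_def)
    define Y where "Y = (\<Union>(G, v)\<in>X. Pair G ` nbrs G v)"
    have graphs: "is_graph n l G" if "(G, v) \<in> X" for G v
      using that Suc.prems(3) by (auto simp: G1_def)
    have "finite Y"
      unfolding Y_def using Suc.prems(2) by (intro finite_UN_I) (auto simp: finite_nbrs[OF graphs])
    moreover have "Y \<subseteq> G1 n l" unfolding Y_def using Suc.prems(3) G1_nbr by auto
    ultimately have Y: "finite Y" "Y \<subseteq> G1 n l" by blast+
    define N where "N G v = image_mset (cr t G) (mset_set (nbrs G v))" for G v
    define D where "D = set_mset M \<union> (\<Union>(G, v)\<in>X. cr t G ` nbrs G v)"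
    have "finite D" using Suc.prems(2) finite_nbrs[OF graphs] by (fastforce simp: D_def)
    have "expressible n l \<Omega> (Suc t) i X (\<lambda>G v. \<Sum>u\<in>nbrs G v. of_bool (cr t G u = d))" for d
      by (rule expressible_agg[OF ij(1) Suc.prems(3) _ Suc.IH[OF ij(2) Y]]) (auto simp: Y_def)
    then have "expressible n l \<Omega> (Suc t) i X (\<lambda>G v. real (count (N G v) d))" for d
      by (rule expressible_cong)
        (simp add: N_def count_image_mset_mset_set finite_nbrs[OF graphs])
    then have "expressible n l \<Omega> (Suc t) i X
        (\<lambda>G v. of_bool (real (count (N G v) d) = real (count M d)))" for d
      by (rule expressible_indicator[OF Suc.prems(2,1)])
    then have "expressible n l \<Omega> (Suc t) i X
        (\<lambda>G v. of_bool (\<forall>d\<in>D. real (count (N G v) d) = real (count M d)))"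
      by (rule expressible_all[OF \<open>finite D\<close> Suc.prems(1)])
    moreover have "expressible n l \<Omega> (Suc t) i X (\<lambda>G v. of_bool (cr t G v = c0))"
      by (rule expressible_mono[OF Suc.IH[OF Suc.prems]]) simp
    ultimately have "expressible n l \<Omega> (Suc t) i X
        (\<lambda>G v. of_bool (cr t G v = c0) * of_bool (\<forall>d\<in>D. real (count (N G v) d) = real (count M d)))"
      by (intro expressible_mul)
    then show ?thesis
    proof (rule expressible_cong)
      fix G v assume "(G, v) \<in> X"
      then have "N G v = M \<longleftrightarrow> (\<forall>d\<in>D. count (N G v) d = count M d)"
        by (intro multiset_eq_iff_on) (auto simp: N_def D_def finite_nbrs[OF graphs])
      then show "of_bool (cr t G v = c0) * of_bool (\<forall>d\<in>D. real (count (N G v) d) = real (count M d))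
          = (of_bool (cr (Suc t) G v = c) :: real)"
        by (simp add: Ref N_def)
    qed
  qed
qed

corollary cr_eq_iff_gtl2_sem_eq:
  assumes "(G, v) \<in> G1 n l" and "(H, w) \<in> G1 n l"
  shows "cr t G v = cr t H w \<longleftrightarrow>
    (\<forall>\<phi>. (\<phi>, 1) \<in> gtl2 l \<Omega> \<and> sd \<phi> \<le> t \<longrightarrow> sem n G (\<lambda>_. v) \<phi> = sem n H (\<lambda>_. w) \<phi>)"
proof
  assume "cr t G v = cr t H w"
  then show "\<forall>\<phi>. (\<phi>, 1) \<in> gtl2 l \<Omega> \<and> sd \<phi> \<le> t \<longrightarrow> sem n G (\<lambda>_. v) \<phi> = sem n H (\<lambda>_. w) \<phi>"
    using sem_eq_if_cr_eq assms by blast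
next
  assume sem_eq: "\<forall>\<phi>. (\<phi>, 1) \<in> gtl2 l \<Omega> \<and> sd \<phi> \<le> t \<longrightarrow> sem n G (\<lambda>_. v) \<phi> = sem n H (\<lambda>_. w) \<phi>"
  have "expressible n l \<Omega> t 1 {(G, v), (H, w)} (\<lambda>G' v'. of_bool (cr t G' v' = cr t G v))"
    using assms by (intro expressible_cr_indicator) auto
  then obtain \<phi> where "(\<phi>, 1) \<in> gtl2 l \<Omega>" "sd \<phi> \<le> t"
    and \<phi>: "\<And>G' v'. (G', v') \<in> {(G, v), (H, w)} \<Longrightarrow>
      sem n G' (\<lambda>_. v') \<phi> = of_bool (cr t G' v' = cr t G v)"
    by (rule expressibleE) blast
  then have "sem n G (\<lambda>_. v) \<phi> = sem n H (\<lambda>_. w) \<phi>" using sem_eq by blast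
  then show "cr t G v = cr t H w" using \<phi>[of G v] \<phi>[of H w] by simp
qed

theorem theorem3:
  fixes n l t :: nat and \<Omega> :: "(nat \<times> (real list \<Rightarrow> real)) set"
  assumes "n \<ge> 1" and "l \<ge> 1"
    and "\<forall>(p, f)\<in>\<Omega>. p \<ge> 1"
  shows "rho1_cr n l t = rho1_gtl n l \<Omega> t"
  unfolding rho1_cr_def rho1_gtl_def using cr_eq_iff_gtl2_sem_eq by blast

end
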